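(* Let $G$ be a $c$-edge-colored multigraph (without loops) with $n$ vertices such that every vertex is incident to at least two edges of different colors. Suppose at least one vertex is incident to at least three edges of pairwise different colors, and that $\delta_{dym}(x)+\delta_{dym}(y)\ge n+1$ for every pair of distinct vertices $x,y$. Then $G$ has a properly colored hamiltonian cycle.
   Context: A $c$-edge-colored multigraph is a finite multigraph without loops (parallel edges allowed) together with a map $\phi:E(G)\to\{1,\ldots,c\}$. For $u,v\in V(G)$, $E_{uv}$ is the set of edges with end vertices $u$ and $v$. Here $\delta_{dym}(x)$ is the number of vertices $y$ such that $E_{xy}$ contains two edges of different colors. A properly colored (PC) hamiltonian cycle is a cyclic sequence $(x_1,f_1,x_2,f_2,\ldots,x_n,f_n,x_1)$ containing every vertex exactly once, with $f_i\in E_{x_ix_{i+1}}$ (indices mod $n$), such that any two consecutive edges, including $f_n$ and $f_1$, have different colors. *)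

theory Defs
  imports Main
begin

text \<open>A c-edge-colored multigraph without loops: finite vertex set V, finite edge set E
 (edges are abstract objects, so parallel edges are allowed), each edge has a set of two
 distinct end vertices, and a colouring phi with values in {1..c}.\<close>

definition colored_multigraph ::
  "'v set \<Rightarrow> 'e set \<Rightarrow> ('e \<Rightarrow> 'v set) \<Rightarrow> nat \<Rightarrow> ('e \<Rightarrow> nat) \<Rightarrow> bool" where
  "colored_multigraph V E ends c phi \<longleftrightarrow>
     finite V \<and> finite E \<and>
     (\<forall>e\<in>E. \<exists>u v. u \<noteq> v \<and> u \<in> V \<and> v \<in> V \<and> ends e = {u, v}) \<and>
     (\<forall>e\<in>E. phi e \<in> {1..c})"

definition edges_between :: "'e set \<Rightarrow> ('e \<Rightarrow> 'v set) \<Rightarrow> 'v \<Rightarrow> 'v \<Rightarrow> 'e set" where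
  "edges_between E ends u v = {e \<in> E. ends e = {u, v}}"

definition incident_edges :: "'e set \<Rightarrow> ('e \<Rightarrow> 'v set) \<Rightarrow> 'v \<Rightarrow> 'e set" where
  "incident_edges E ends x = {e \<in> E. x \<in> ends e}"

definition delta_dym :: "'v set \<Rightarrow> 'e set \<Rightarrow> ('e \<Rightarrow> 'v set) \<Rightarrow> ('e \<Rightarrow> nat) \<Rightarrow> 'v \<Rightarrow> nat" where
  "delta_dym V E ends phi x =
     card {y \<in> V. \<exists>e\<in>edges_between E ends x y. \<exists>f\<in>edges_between E ends x y. phi e \<noteq> phi f}"

text \<open>A properly coloured hamiltonian cycle (x_1,f_1,...,x_n,f_n,x_1), indices mod n.\<close>
definition PC_ham_cycle ::
  "'v set \<Rightarrow> 'e set \<Rightarrow> ('e \<Rightarrow> 'v set) \<Rightarrow> ('e \<Rightarrow> nat) \<Rightarrow> 'v list \<Rightarrow> 'e list \<Rightarrow> bool" where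
  "PC_ham_cycle V E ends phi xs fs \<longleftrightarrow>
     (let n = length xs in
       distinct xs \<and> set xs = V \<and> length fs = n \<and>
       (\<forall>i<n. fs ! i \<in> edges_between E ends (xs ! i) (xs ! ((i + 1) mod n))) \<and>
       (\<forall>i<n. phi (fs ! i) \<noteq> phi (fs ! ((i + 1) mod n))))"

definition has_PC_ham_cycle ::
  "'v set \<Rightarrow> 'e set \<Rightarrow> ('e \<Rightarrow> 'v set) \<Rightarrow> ('e \<Rightarrow> nat) \<Rightarrow> bool" where
  "has_PC_ham_cycle V E ends phi \<longleftrightarrow> (\<exists>xs fs. PC_ham_cycle V E ends phi xs fs)"

end

(*
  Call a pair {x, y} multicoloured if E_xy carries two different colours. Then delta_dym is
  the degree in the simple graph of multicoloured pairs, so by Ore's theorem this graph has a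
  Hamiltonian cycle, and the surplus +1 in the degree condition lets a Posa rotation reroute
  any Hamiltonian cycle through a prescribed further pair while keeping one of its old edges.
  On a Hamiltonian cycle of multicoloured pairs, a PC cycle amounts to choosing a colour from
  the colour set of every cycle edge with consecutive choices distinct; this fails only if the
  cycle is odd and all these sets are one and the same 2-set A. Assuming there is no PC cycle,
  rerouting propagates A to every multicoloured pair. A vertex v with three colours then has an
  edge vy of a colour a outside A, so every edge between v and y has colour a. On a Hamiltonian
  cycle through {v, y} the colour sets are {a}, A, ..., A, and starting with a and choosing
  greedily around the cycle yields a PC cycle after all.
*)
theory Submission
  imports Defs
begin

lemma obtain_two_elements:
  assumes "2 \<le> card A"
  obtains a b where "a \<in> A" "b \<in> A" "a \<noteq> b"
  using assms by (auto simp: numeral_2_eq_2 card_le_Suc_iff)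

lemma obtain_other_element:
  assumes "2 \<le> card A"
  obtains b where "b \<in> A" "b \<noteq> c"
  using assms by (metis obtain_two_elements)

section \<open>Paths and cycles along a list of vertices\<close>

fun path_edges :: "'a list \<Rightarrow> 'a set set" where
  "path_edges (x # y # zs) = insert {x, y} (path_edges (y # zs))"
| "path_edges _ = {}"

definition cycle_edges :: "'a list \<Rightarrow> 'a set set" where
  "cycle_edges xs = (if xs = [] then {} else insert {last xs, hd xs} (path_edges xs))"

lemma path_edges_Cons:
  "path_edges (x # ys) = (if ys = [] then {} else insert {x, hd ys} (path_edges ys))"
  by (cases ys) auto

lemma path_edges_append:
  "path_edges (xs @ ys) =
     path_edges xs \<union> path_edges ys \<union> (if xs = [] \<or> ys = [] then {} else {{last xs, hd ys}})"
  by (induction xs rule: path_edges.induct) (auto simp: path_edges_Cons)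

lemma path_edges_rev [simp]: "path_edges (rev xs) = path_edges xs"
  by (induction xs) (auto simp: path_edges_append path_edges_Cons hd_rev last_rev insert_commute)

lemma cycle_edges_rotate [simp]: "cycle_edges (rotate k xs) = cycle_edges xs"
proof -
  have "cycle_edges (rotate1 xs) = cycle_edges xs" for xs :: "'a list"
    by (cases xs) (auto simp: cycle_edges_def path_edges_append path_edges_Cons insert_commute)
  then show ?thesis
    by (induction k) (auto simp: rotate_Suc)
qed

lemma mem_path_edges_iff: "e \<in> path_edges xs \<longleftrightarrow> (\<exists>i. Suc i < length xs \<and> e = {xs ! i, xs ! Suc i})"
proof (induction xs rule: path_edges.induct)
  case (1 x y zs)
  show ?case
  proof
    assume "e \<in> path_edges (x # y # zs)"
    then consider "e = {x, y}" | i where "Suc i < length (y # zs)" "e = {(y # zs) ! i, (y # zs) ! Suc i}"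
      using 1 by auto
    then show "\<exists>i. Suc i < length (x # y # zs) \<and> e = {(x # y # zs) ! i, (x # y # zs) ! Suc i}"
      by cases (auto intro: exI[of _ 0] exI[of _ "Suc _"])
  next
    assume "\<exists>i. Suc i < length (x # y # zs) \<and> e = {(x # y # zs) ! i, (x # y # zs) ! Suc i}"
    then obtain i where "Suc i < length (x # y # zs)" "e = {(x # y # zs) ! i, (x # y # zs) ! Suc i}"
      by blast
    then show "e \<in> path_edges (x # y # zs)"
      using 1 by (cases i) auto
  qed
qed auto

lemma mem_cycle_edges_iff:
  assumes "xs \<noteq> []"
  shows "e \<in> cycle_edges xs \<longleftrightarrow> (\<exists>i<length xs. e = {xs ! i, xs ! (Suc i mod length xs)})"
proof -
  let ?n = "length xs"
  have "(\<exists>i<?n. e = {xs ! i, xs ! (Suc i mod ?n)}) \<longleftrightarrow>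
        e = {xs ! (?n - 1), xs ! 0} \<or> (\<exists>i. Suc i < ?n \<and> e = {xs ! i, xs ! Suc i})"
  proof
    assume "\<exists>i<?n. e = {xs ! i, xs ! (Suc i mod ?n)}"
    then obtain i where i: "i < ?n" "e = {xs ! i, xs ! (Suc i mod ?n)}" by blast
    show "e = {xs ! (?n - 1), xs ! 0} \<or> (\<exists>i. Suc i < ?n \<and> e = {xs ! i, xs ! Suc i})"
    proof (cases "Suc i = ?n")
      case True
      then show ?thesis using i by (intro disjI1) (metis diff_Suc_1 mod_self)
    next
      case False
      then show ?thesis using i by (intro disjI2 exI[of _ i]) auto
    qed
  next
    assume "e = {xs ! (?n - 1), xs ! 0} \<or> (\<exists>i. Suc i < ?n \<and> e = {xs ! i, xs ! Suc i})"
    then show "\<exists>i<?n. e = {xs ! i, xs ! (Suc i mod ?n)}"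
    proof
      assume "\<exists>i. Suc i < ?n \<and> e = {xs ! i, xs ! Suc i}"
      then show ?thesis by (metis Suc_lessD mod_less)
    qed (use assms in \<open>auto intro: exI[of _ "?n - 1"]\<close>)
  qed
  then show ?thesis
    using assms by (simp add: cycle_edges_def mem_path_edges_iff last_conv_nth hd_conv_nth)
qed

lemma path_edges_subset: "e \<in> path_edges xs \<Longrightarrow> e \<subseteq> set xs"
  by (induction xs rule: path_edges.induct) auto

lemma cycle_edges_subset: "e \<in> cycle_edges xs \<Longrightarrow> e \<subseteq> set xs"
  by (auto simp: cycle_edges_def dest: path_edges_subset split: if_splits)

lemma distinct_hd_neq_last: "distinct xs \<Longrightarrow> 2 \<le> length xs \<Longrightarrow> hd xs \<noteq> last xs"
  by (cases xs) auto

lemma path_edge_index_inj: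
  assumes "distinct ps" "0 < i" "i < length ps" "0 < j" "j < length ps"
    "{ps ! (i - 1), ps ! i} = {ps ! (j - 1), ps ! j}"
  shows "i = j"
proof (rule ccontr)
  assume "i \<noteq> j"
  then have "ps ! i \<noteq> ps ! j" using assms by (simp add: nth_eq_iff_index_eq)
  then have "ps ! i = ps ! (j - 1)" "ps ! (i - 1) = ps ! j"
    using assms(6) by (auto simp: doubleton_eq_iff)
  then have "i = j - 1" "i - 1 = j" using assms by (auto simp: nth_eq_iff_index_eq)
  then show False using assms by simp
qed

lemma cycle_edge_index_inj:
  assumes "distinct xs" "3 \<le> length xs" "i < length xs" "j < length xs"
    "{xs ! i, xs ! (Suc i mod length xs)} = {xs ! j, xs ! (Suc j mod length xs)}"
  shows "i = j"
proof (rule ccontr)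
  let ?n = "length xs"
  assume "i \<noteq> j"
  then have "xs ! i \<noteq> xs ! j" using assms(1,3,4) by (simp add: nth_eq_iff_index_eq)
  then have "xs ! i = xs ! (Suc j mod ?n)" "xs ! (Suc i mod ?n) = xs ! j"
    using assms(5) by (auto simp: doubleton_eq_iff)
  moreover have "0 < ?n" using assms(3) by linarith
  then have "Suc i mod ?n < ?n" "Suc j mod ?n < ?n" by simp_all
  ultimately have "i = Suc j mod ?n" "Suc i mod ?n = j"
    using assms(1,3,4) by (simp_all add: nth_eq_iff_index_eq)
  then have "(i + 2) mod ?n = i" by (metis add_2_eq_Suc' mod_Suc_eq)
  then show False using assms(2,3) by (auto simp: mod_if split: if_splits)
qed

lemma hd_last_notin_path_edges:
  assumes "distinct ps" "3 \<le> length ps"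
  shows "{hd ps, last ps} \<notin> path_edges ps"
proof
  assume "{hd ps, last ps} \<in> path_edges ps"
  moreover have ne: "ps \<noteq> []" using assms(2) by auto
  ultimately obtain i where i: "Suc i < length ps" "{ps ! 0, ps ! (length ps - 1)} = {ps ! i, ps ! Suc i}"
    by (auto simp: mem_path_edges_iff hd_conv_nth last_conv_nth)
  then consider "ps ! 0 = ps ! i" "ps ! (length ps - 1) = ps ! Suc i" | "ps ! 0 = ps ! Suc i"
    by (auto simp: doubleton_eq_iff)
  then show False
  proof cases
    case 1
    then have "0 = i" "length ps - 1 = Suc i"
      using ne i(1) nth_eq_iff_index_eq[OF assms(1), of 0 i]
        nth_eq_iff_index_eq[OF assms(1), of "length ps - 1" "Suc i"] by simp_all
    then show False using assms(2) by simp
  next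
    case 2
    then show False using ne i(1) nth_eq_iff_index_eq[OF assms(1), of 0 "Suc i"] by simp
  qed
qed

lemma obtain_rotation_from:
  assumes "distinct xs" "x \<in> set xs"
  obtains zs where "distinct (x # zs)" "set (x # zs) = set xs" "length (x # zs) = length xs"
    "cycle_edges (x # zs) = cycle_edges xs"
proof -
  obtain k where k: "k < length xs" "xs ! k = x" using assms(2) by (meson in_set_conv_nth)
  then have "hd (rotate k xs) = x" using hd_rotate_conv_nth[of xs k] by fastforce
  moreover have "rotate k xs \<noteq> []" using k by auto
  ultimately have "rotate k xs = x # tl (rotate k xs)" by (metis list.collapse)
  then show ?thesis
    using that[of "tl (rotate k xs)"] assms(1) by (metis cycle_edges_rotate distinct_rotate
        length_rotate set_rotate)
qed

lemma ham_path_of_cycle_edge: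
  assumes "distinct xs" "3 \<le> length xs" "{x, z} \<in> cycle_edges xs" "x \<noteq> z"
  obtains ps where "distinct ps" "set ps = set xs" "hd ps = x" "last ps = z"
    "length ps = length xs" "path_edges ps \<subseteq> cycle_edges xs"
proof -
  have "x \<in> set xs" using cycle_edges_subset[OF assms(3)] by auto
  then obtain zs where zs: "distinct (x # zs)" "set (x # zs) = set xs"
    "length (x # zs) = length xs" "cycle_edges (x # zs) = cycle_edges xs"
    by (rule obtain_rotation_from[OF assms(1)])
  have zne: "zs \<noteq> []" using zs(3) assms(2) by auto
  have ce: "cycle_edges xs = insert {last zs, x} (insert {x, hd zs} (path_edges zs))"
    using zne zs(4) by (simp add: cycle_edges_def path_edges_Cons)
  have "{x, z} \<notin> path_edges zs" using path_edges_subset zs(1) by fastforce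
  then have "z = last zs \<or> z = hd zs"
    using ce assms(3,4) by (auto simp: doubleton_eq_iff)
  then show ?thesis
  proof
    assume "z = last zs"
    then show ?thesis using that[of "x # zs"] zs zne ce by (auto simp: path_edges_Cons)
  next
    assume "z = hd zs"
    moreover have "path_edges (x # rev zs) = insert {x, last zs} (path_edges zs)"
      using zne by (simp add: path_edges_Cons hd_rev)
    ultimately show ?thesis
      using that[of "x # rev zs"] zs zne ce by (auto simp: last_rev insert_commute)
  qed
qed

lemma ham_path_through_chord:
  assumes "distinct xs" "x \<in> set xs" "y \<in> set xs" "x \<noteq> y" "{x, y} \<notin> cycle_edges xs"
  obtains ps e1 e2 where "distinct ps" "set ps = set xs"
    "path_edges ps \<subseteq> insert {x, y} (cycle_edges xs)" "{x, y} \<in> path_edges ps"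
    "e1 \<in> cycle_edges xs \<inter> path_edges ps" "e2 \<in> cycle_edges xs \<inter> path_edges ps" "e1 \<noteq> e2"
proof -
  txt \<open>Walk along the cycle from the successor of x to y, jump back to x along the chord and walk
    backwards from x to the successor of y.\<close>
  obtain zs where zs: "distinct (x # zs)" "set (x # zs) = set xs" "length (x # zs) = length xs"
    "cycle_edges (x # zs) = cycle_edges xs"
    by (rule obtain_rotation_from[OF assms(1,2)])
  have "y \<in> set zs" using zs(2) assms(3,4) by auto
  then obtain m where m: "m < length zs" "zs ! m = y" by (meson in_set_conv_nth)
  have zne: "zs \<noteq> []" using m by auto
  have ce: "cycle_edges xs = insert {last zs, x} (insert {x, hd zs} (path_edges zs))"
    using zne zs(4) by (simp add: cycle_edges_def path_edges_Cons)
  have "y \<noteq> hd zs" "y \<noteq> last zs" using assms(5) ce by auto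
  then have "m \<noteq> 0" "m \<noteq> length zs - 1" using m zne by (metis hd_conv_nth, metis last_conv_nth)
  then have m_bounds: "0 < m" "Suc m < length zs" using m(1) by linarith+
  define a where "a = take (Suc m) zs"
  define b where "b = drop (Suc m) zs"
  have a: "a \<noteq> []" "2 \<le> length a" "last a = y"
    using m m_bounds by (auto simp: a_def take_Suc_conv_app_nth)
  have b: "b \<noteq> []" "last b = last zs" using m_bounds by (auto simp: b_def)
  have zs_split: "path_edges zs = path_edges a \<union> path_edges b \<union> {{y, hd b}}"
    using path_edges_append[of a b] a b by (simp add: a_def b_def)
  have zs_ab: "zs = a @ b" by (simp add: a_def b_def)
  define ps where "ps = a @ x # rev b"
  have edges: "path_edges ps = path_edges a \<union> path_edges b \<union> {{y, x}, {x, last zs}}"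
    using a b by (simp add: ps_def path_edges_append path_edges_Cons hd_rev insert_commute)
  have "distinct ps" "set ps = set xs"
    using zs(1,2) unfolding ps_def zs_ab by auto
  moreover have "path_edges ps \<subseteq> insert {x, y} (cycle_edges xs)" "{x, y} \<in> path_edges ps"
    unfolding edges ce zs_split by auto
  moreover have "{a ! 0, a ! 1} \<in> path_edges a"
    unfolding mem_path_edges_iff using a(2) by (intro exI[of _ 0]) auto
  then have "{a ! 0, a ! 1} \<in> cycle_edges xs \<inter> path_edges ps"
    unfolding edges ce zs_split by blast
  moreover have "{x, last zs} \<in> cycle_edges xs \<inter> path_edges ps"
    unfolding edges ce by blast
  moreover have "a ! 0 \<in> set a" "a ! 1 \<in> set a" "x \<notin> set a"
    using a(2) zs(1) unfolding zs_ab by (auto intro!: nth_mem)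
  then have "{a ! 0, a ! 1} \<noteq> {x, last zs}" by (auto simp: doubleton_eq_iff)
  ultimately show ?thesis by (rule that)
qed

section \<open>Hamiltonian cycles: Posa rotations and Ore's theorem\<close>

definition all_pairs :: "'a set \<Rightarrow> 'a set set" where
  "all_pairs V = {{u, w} | u w. u \<in> V \<and> w \<in> V \<and> u \<noteq> w}"

definition deg :: "'a set \<Rightarrow> 'a set set \<Rightarrow> 'a \<Rightarrow> nat" where
  "deg V F u = card {w \<in> V. {u, w} \<in> F}"

definition ham_cycle :: "'a set \<Rightarrow> 'a set set \<Rightarrow> 'a list \<Rightarrow> bool" where
  "ham_cycle V F xs \<longleftrightarrow> distinct xs \<and> set xs = V \<and> cycle_edges xs \<subseteq> F"

lemma finite_all_pairs: "finite V \<Longrightarrow> finite (all_pairs V)"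
  by (rule finite_subset[of _ "Pow V"]) (auto simp: all_pairs_def)

lemma cycle_edges_subset_all_pairs:
  assumes "distinct xs" "2 \<le> length xs"
  shows "cycle_edges xs \<subseteq> all_pairs (set xs)"
proof
  fix e assume e: "e \<in> cycle_edges xs"
  have ne: "xs \<noteq> []" using assms(2) by auto
  then obtain i where i: "i < length xs" "e = {xs ! i, xs ! (Suc i mod length xs)}"
    using e mem_cycle_edges_iff by blast
  have "Suc i mod length xs \<noteq> i"
    using assms(2) i(1) by (cases "Suc i < length xs") (auto simp: mod_if)
  then have "xs ! i \<noteq> xs ! (Suc i mod length xs)"
    using assms(1) i(1) ne by (simp add: nth_eq_iff_index_eq)
  moreover have "xs ! i \<in> set xs" "xs ! (Suc i mod length xs) \<in> set xs"
    using i(1) ne by simp_all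
  ultimately show "e \<in> all_pairs (set xs)"
    using i(2) unfolding all_pairs_def by blast
qed

lemma deg_mono: "finite V \<Longrightarrow> F \<subseteq> F' \<Longrightarrow> deg V F u \<le> deg V F' u"
  unfolding deg_def by (rule card_mono) auto

lemma deg_le_card_minus_one:
  assumes "finite V" "x \<in> V" "\<forall>u. {u} \<notin> F"
  shows "deg V F x \<le> card V - 1"
proof -
  have "{w \<in> V. {x, w} \<in> F} \<subseteq> V - {x}" using assms(3) by auto
  then have "deg V F x \<le> card (V - {x})" unfolding deg_def using assms(1) by (simp add: card_mono)
  then show ?thesis using assms(2) by simp
qed

lemma length_ham_cycle: "ham_cycle V F xs \<Longrightarrow> length xs = card V"
  by (metis distinct_card ham_cycle_def)

(* Posa rotation: for i in crossing_indices F ps, dropping the path edge {ps ! (i - 1), ps ! i}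
   and adding {hd ps, ps ! i} and {last ps, ps ! (i - 1)} closes ps into a cycle. *)
definition crossing_indices :: "'a set set \<Rightarrow> 'a list \<Rightarrow> nat set" where
  "crossing_indices F ps =
     {i \<in> {1..<length ps}. {hd ps, ps ! i} \<in> F \<and> {last ps, ps ! (i - 1)} \<in> F}"

lemma ham_cycle_of_crossing_index:
  assumes "distinct ps" "set ps = V" "path_edges ps \<subseteq> F" "i \<in> crossing_indices F ps"
  shows "ham_cycle V F (take i ps @ rev (drop i ps))"
    and "path_edges ps - {{ps ! (i - 1), ps ! i}} \<subseteq> cycle_edges (take i ps @ rev (drop i ps))"
proof -
  have i: "0 < i" "i < length ps" and crossing: "{hd ps, ps ! i} \<in> F" "{last ps, ps ! (i - 1)} \<in> F"
    using assms(4) by (auto simp: crossing_indices_def)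
  have ne: "take i ps \<noteq> []" "drop i ps \<noteq> []" using i by auto
  have ends: "last (take i ps) = ps ! (i - 1)" "hd (drop i ps) = ps ! i"
    "hd (take i ps) = hd ps" "last (drop i ps) = last ps"
    using i ne by (simp_all add: last_conv_nth hd_drop_conv_nth)
  have split: "path_edges ps =
      path_edges (take i ps) \<union> path_edges (drop i ps) \<union> {{ps ! (i - 1), ps ! i}}"
    using path_edges_append[of "take i ps" "drop i ps"] ne ends by simp
  have rotated: "cycle_edges (take i ps @ rev (drop i ps)) =
      path_edges (take i ps) \<union> path_edges (drop i ps) \<union> {{ps ! (i - 1), last ps}, {ps ! i, hd ps}}"
    using ne ends by (auto simp: cycle_edges_def path_edges_append hd_rev last_rev)
  have "distinct (take i ps @ rev (drop i ps))" "set (take i ps @ rev (drop i ps)) = V"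
    using assms(1,2) by (metis append_take_drop_id distinct_append distinct_rev set_append set_rev)+
  then show "ham_cycle V F (take i ps @ rev (drop i ps))"
    unfolding ham_cycle_def using rotated split assms(3) crossing by (auto simp: insert_commute)
  show "path_edges ps - {{ps ! (i - 1), ps ! i}} \<subseteq> cycle_edges (take i ps @ rev (drop i ps))"
    using rotated split by auto
qed

lemma deg_ends_le_card_crossing_indices:
  assumes "distinct ps" "2 \<le> length ps" "\<forall>u. {u} \<notin> F"
  shows "deg (set ps) F (hd ps) + deg (set ps) F (last ps)
           \<le> card (crossing_indices F ps) + (length ps - 1)"
proof -
  let ?n = "length ps"
  define H where "H = {i \<in> {1..<?n}. {hd ps, ps ! i} \<in> F}"
  define L where "L = {i \<in> {1..<?n}. {last ps, ps ! (i - 1)} \<in> F}"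
  have ne: "ps \<noteq> []" using assms(2) by auto
  have "{w \<in> set ps. {hd ps, w} \<in> F} = (\<lambda>i. ps ! i) ` H"
  proof
    show "{w \<in> set ps. {hd ps, w} \<in> F} \<subseteq> (\<lambda>i. ps ! i) ` H"
    proof
      fix w assume w: "w \<in> {w \<in> set ps. {hd ps, w} \<in> F}"
      then obtain j where j: "j < ?n" "ps ! j = w" by (auto simp: in_set_conv_nth)
      have "j \<noteq> 0" using w j assms(3) ne by (metis (mono_tags) hd_conv_nth insert_absorb2 mem_Collect_eq)
      then show "w \<in> (\<lambda>i. ps ! i) ` H" using j w unfolding H_def by force
    qed
  qed (auto simp: H_def)
  moreover have "{w \<in> set ps. {last ps, w} \<in> F} = (\<lambda>i. ps ! (i - 1)) ` L"
  proof
    show "{w \<in> set ps. {last ps, w} \<in> F} \<subseteq> (\<lambda>i. ps ! (i - 1)) ` L"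
    proof
      fix w assume w: "w \<in> {w \<in> set ps. {last ps, w} \<in> F}"
      then obtain j where j: "j < ?n" "ps ! j = w" by (auto simp: in_set_conv_nth)
      have "j \<noteq> ?n - 1" using w j assms(3) ne by (auto simp: last_conv_nth)
      then have "Suc j \<in> L" using j w unfolding L_def by auto
      then show "w \<in> (\<lambda>i. ps ! (i - 1)) ` L" using j by force
    qed
  qed (auto simp: L_def)
  moreover have "inj_on (\<lambda>i. ps ! i) H" "inj_on (\<lambda>i. ps ! (i - 1)) L"
    using assms(1) by (auto simp: H_def L_def inj_on_def nth_eq_iff_index_eq)
  ultimately have "deg (set ps) F (hd ps) + deg (set ps) F (last ps) = card H + card L"
    by (simp add: deg_def card_image)
  also have "\<dots> = card (H \<union> L) + card (H \<inter> L)"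
    by (rule card_Un_Int) (auto simp: H_def L_def)
  also have "card (H \<union> L) \<le> ?n - 1"
  proof -
    have "H \<union> L \<subseteq> {1..<?n}" by (auto simp: H_def L_def)
    then show ?thesis using card_mono[OF finite_atLeastLessThan] by fastforce
  qed
  also have "H \<inter> L = crossing_indices F ps"
    by (auto simp: H_def L_def crossing_indices_def)
  finally show ?thesis by simp
qed

lemma ham_cycle_of_ham_path:
  assumes "distinct ps" "set ps = V" "2 \<le> length ps" "path_edges ps \<subseteq> F" "\<forall>u. {u} \<notin> F"
    "length ps \<le> deg V F (hd ps) + deg V F (last ps)"
  shows "\<exists>ys. ham_cycle V F ys"
proof -
  have "crossing_indices F ps \<noteq> {}"
    using deg_ends_le_card_crossing_indices[OF assms(1,3,5)] assms(2,3,6) by fastforce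
  then show ?thesis using ham_cycle_of_crossing_index(1)[OF assms(1,2,4)] by blast
qed

lemma ham_cycle_delete_edge:
  assumes "ham_cycle V (insert {x, z} F) xs" "3 \<le> card V" "x \<noteq> z" "\<forall>u. {u} \<notin> F"
    "card V \<le> deg V F x + deg V F z"
  shows "\<exists>ys. ham_cycle V F ys"
proof (cases "{x, z} \<in> cycle_edges xs")
  case False
  then have "ham_cycle V F xs" using assms(1) by (auto simp: ham_cycle_def)
  then show ?thesis by blast
next
  case True
  have xs: "distinct xs" "set xs = V" "length xs = card V"
    using assms(1) distinct_card by (fastforce simp: ham_cycle_def)+
  then obtain ps where ps: "distinct ps" "set ps = V" "hd ps = x" "last ps = z"
    "length ps = card V" "path_edges ps \<subseteq> cycle_edges xs"
    using ham_path_of_cycle_edge[OF xs(1) _ True assms(3)] assms(2) by metis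
  have "{x, z} \<notin> path_edges ps"
    using hd_last_notin_path_edges[OF ps(1)] ps(3,4,5) assms(2) by simp
  then have "path_edges ps \<subseteq> F" using ps(6) assms(1) by (auto simp: ham_cycle_def)
  moreover have "2 \<le> length ps" using ps(5) assms(2) by simp
  ultimately show ?thesis
    using ham_cycle_of_ham_path[OF ps(1,2) _ _ assms(4)] ps(3,4,5) assms(5) by metis
qed

theorem ore_ham_cycle:
  assumes "finite V" "3 \<le> card V" "\<forall>u. {u} \<notin> F"
    "\<forall>u\<in>V. \<forall>w\<in>V. u \<noteq> w \<longrightarrow> {u, w} \<notin> F \<longrightarrow> card V \<le> deg V F u + deg V F w"
  shows "\<exists>xs. ham_cycle V F xs"
  using assms(3,4)
proof (induction "card (all_pairs V - F)" arbitrary: F rule: less_induct)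
  case less
  show ?case
  proof (cases "all_pairs V \<subseteq> F")
    case True
    obtain xs where xs: "distinct xs" "set xs = V" using finite_distinct_list[OF assms(1)] by blast
    then have "2 \<le> length xs" using assms(2) distinct_card by fastforce
    then have "ham_cycle V F xs"
      using cycle_edges_subset_all_pairs[OF xs(1)] True xs by (auto simp: ham_cycle_def)
    then show ?thesis by blast
  next
    case False
    then obtain x z where xz: "x \<in> V" "z \<in> V" "x \<noteq> z" "{x, z} \<notin> F"
      by (auto simp: all_pairs_def)
    let ?F' = "insert {x, z} F"
    have "all_pairs V - ?F' \<subset> all_pairs V - F"
      using xz by (auto simp: all_pairs_def)
    then have "card (all_pairs V - ?F') < card (all_pairs V - F)"
      using finite_all_pairs[OF assms(1)] by (meson finite_Diff psubset_card_mono)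
    moreover have "\<forall>u. {u} \<notin> ?F'" using less.prems(1) xz(3) by (auto simp: doubleton_eq_iff)
    moreover have "card V \<le> deg V ?F' u + deg V ?F' w"
      if "u \<in> V" "w \<in> V" "u \<noteq> w" "{u, w} \<notin> ?F'" for u w
    proof -
      have "card V \<le> deg V F u + deg V F w" using less.prems(2) that by blast
      moreover have "deg V F v \<le> deg V ?F' v" for v by (rule deg_mono[OF assms(1)]) auto
      ultimately show ?thesis by (meson add_mono le_trans)
    qed
    ultimately obtain xs where "ham_cycle V ?F' xs" using less.hyps by blast
    moreover have "card V \<le> deg V F x + deg V F z" using less.prems(2) xz by blast
    ultimately show ?thesis
      using ham_cycle_delete_edge[OF _ assms(2) xz(3) less.prems(1)] by blast
  qed
qed

lemma ham_cycle_of_ham_path_avoiding: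
  assumes "distinct ps" "set ps = V" "2 \<le> length ps" "path_edges ps \<subseteq> F" "F0 \<subseteq> F"
    "\<forall>u. {u} \<notin> F0" "length ps + 1 \<le> deg V F0 (hd ps) + deg V F0 (last ps)"
  obtains ys r where "ham_cycle V F ys" "r \<noteq> q" "path_edges ps - {r} \<subseteq> cycle_edges ys"
proof -
  txt \<open>The surplus over Ore's bound yields two crossing indices; they remove different path
    edges, so one of them spares q.\<close>
  have "2 \<le> card (crossing_indices F0 ps)"
    using deg_ends_le_card_crossing_indices[OF assms(1,3,6)] assms(2,3,7) by simp
  then obtain i1 i2 where i12: "i1 \<in> crossing_indices F0 ps" "i2 \<in> crossing_indices F0 ps" "i1 \<noteq> i2"
    by (rule obtain_two_elements)
  have "{ps ! (i1 - 1), ps ! i1} \<noteq> {ps ! (i2 - 1), ps ! i2}"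
    using path_edge_index_inj[OF assms(1)] i12 by (auto simp: crossing_indices_def)
  then obtain i where i: "i \<in> crossing_indices F0 ps" "{ps ! (i - 1), ps ! i} \<noteq> q"
    using i12(1,2) by (cases "{ps ! (i1 - 1), ps ! i1} = q") auto
  then have "i \<in> crossing_indices F ps" using assms(5) by (auto simp: crossing_indices_def)
  then show ?thesis
    using that[OF _ i(2)] ham_cycle_of_crossing_index[OF assms(1,2,4)] by blast
qed

lemma ham_cycle_through_pair:
  assumes "ham_cycle V F0 xs" "F0 \<subseteq> F" "\<forall>u. {u} \<notin> F0" "x \<in> V" "y \<in> V" "x \<noteq> y"
    "{x, y} \<notin> cycle_edges xs" "{x, y} \<in> F"
    "\<forall>u\<in>V. \<forall>w\<in>V. u \<noteq> w \<longrightarrow> card V + 1 \<le> deg V F0 u + deg V F0 w"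
  obtains ys e where "ham_cycle V F ys" "{x, y} \<in> cycle_edges ys"
    "e \<in> cycle_edges xs" "e \<in> cycle_edges ys"
proof -
  have xs: "distinct xs" "set xs = V" "cycle_edges xs \<subseteq> F0"
    using assms(1) by (auto simp: ham_cycle_def)
  obtain ps e1 e2 where ps: "distinct ps" "set ps = V"
    "path_edges ps \<subseteq> insert {x, y} (cycle_edges xs)" "{x, y} \<in> path_edges ps"
    and e12: "e1 \<in> cycle_edges xs \<inter> path_edges ps" "e2 \<in> cycle_edges xs \<inter> path_edges ps" "e1 \<noteq> e2"
    using ham_path_through_chord[OF xs(1), of x y] assms(4-7) unfolding xs(2) by blast
  have len: "length ps = card V" using ps(1,2) distinct_card by fastforce
  have "card {x, y} \<le> card (set ps)" using assms(4,5) ps(2) by (intro card_mono) auto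
  then have len2: "2 \<le> length ps" using len ps(2) assms(6) by simp
  then have "ps \<noteq> []" by auto
  then have "hd ps \<in> V" "last ps \<in> V" "hd ps \<noteq> last ps"
    using ps(1,2) len2 distinct_hd_neq_last by auto
  then have "length ps + 1 \<le> deg V F0 (hd ps) + deg V F0 (last ps)" using assms(9) len by simp
  moreover have "path_edges ps \<subseteq> F" using ps(3) xs(3) assms(2,8) by auto
  ultimately obtain ys r where ys: "ham_cycle V F ys" "r \<noteq> {x, y}"
    "path_edges ps - {r} \<subseteq> cycle_edges ys"
    using ham_cycle_of_ham_path_avoiding[OF ps(1,2) len2 _ assms(2,3)] by metis
  have "{x, y} \<in> cycle_edges ys" using ys(2,3) ps(4) by blast
  moreover have "e1 \<in> cycle_edges ys \<or> e2 \<in> cycle_edges ys" using ys(3) e12 by blast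
  ultimately show ?thesis using that ys(1) e12 by blast
qed

section \<open>Choosing colours around a cycle\<close>

definition proper_cyclic_choice :: "nat \<Rightarrow> (nat \<Rightarrow> 'c set) \<Rightarrow> (nat \<Rightarrow> 'c) \<Rightarrow> bool" where
  "proper_cyclic_choice n L col \<longleftrightarrow> (\<forall>i<n. col i \<in> L i \<and> col i \<noteq> col (Suc i mod n))"

lemma proper_path_choice_exists:
  assumes "a \<in> L 0" "\<forall>j. 0 < j \<and> j \<le> k \<longrightarrow> 2 \<le> card (L j)"
  shows "\<exists>col. col 0 = a \<and> (\<forall>j\<le>k. col j \<in> L j) \<and> (\<forall>j<k. col j \<noteq> col (Suc j))"
  using assms(2)
proof (induction k)
  case 0
  show ?case using assms(1) by (intro exI[of _ "\<lambda>_. a"]) simp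
next
  case (Suc k)
  then have "\<forall>j. 0 < j \<and> j \<le> k \<longrightarrow> 2 \<le> card (L j)" by simp
  then obtain col where col: "col 0 = a" "\<forall>j\<le>k. col j \<in> L j" "\<forall>j<k. col j \<noteq> col (Suc j)"
    using Suc.IH by blast
  have "2 \<le> card (L (Suc k))" using Suc.prems by blast
  then obtain b where b: "b \<in> L (Suc k)" "b \<noteq> col k" by (rule obtain_other_element)
  have "\<forall>j\<le>Suc k. (col(Suc k := b)) j \<in> L j" using col(2) b(1) by (simp add: le_Suc_eq)
  moreover have "\<forall>j<Suc k. (col(Suc k := b)) j \<noteq> (col(Suc k := b)) (Suc j)"
    using col(3) b(2) by (simp add: less_Suc_eq)
  ultimately show ?case using col(1) by (intro exI[of _ "col(Suc k := b)"]) simp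
qed

lemma proper_cyclic_choice_exists_from_0:
  assumes "2 \<le> n" "a \<in> L 0" "\<forall>j. 0 < j \<and> j < n \<longrightarrow> 2 \<le> card (L j)"
    "2 \<le> card (L (n - 1) - {a})"
  shows "\<exists>col. proper_cyclic_choice n L col"
proof -
  txt \<open>Choose greedily along 0, ..., n - 1; at the last position the hypothesis on L (n - 1)
    leaves a colour differing from both neighbours a and col (n - 2).\<close>
  have "\<forall>j. 0 < j \<and> j \<le> n - 2 \<longrightarrow> 2 \<le> card (L j)"
  proof (intro allI impI)
    fix j assume "0 < j \<and> j \<le> n - 2"
    then have "0 < j \<and> j < n" using assms(1) by linarith
    then show "2 \<le> card (L j)" using assms(3) by blast
  qed
  then obtain col where col: "col 0 = a" "\<forall>j\<le>n - 2. col j \<in> L j" "\<forall>j<n - 2. col j \<noteq> col (Suc j)"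
    using proper_path_choice_exists[of a L, OF assms(2)] by blast
  obtain b where b: "b \<in> L (n - 1) - {a}" "b \<noteq> col (n - 2)"
    by (rule obtain_other_element[OF assms(4)])
  have "proper_cyclic_choice n L (col(n - 1 := b))"
    unfolding proper_cyclic_choice_def
  proof (intro allI impI conjI)
    fix i assume i: "i < n"
    show "(col(n - 1 := b)) i \<in> L i" using i col(2) b(1) by simp
    consider "Suc i < n - 1" | "Suc i = n - 1" | "Suc i = n" using i by linarith
    then show "(col(n - 1 := b)) i \<noteq> (col(n - 1 := b)) (Suc i mod n)"
    proof cases
      case 1
      then show ?thesis using col(3) by simp
    next
      case 2
      then have "i = n - 2" by simp
      then show ?thesis using 2 b(2) by simp
    next
      case 3
      then show ?thesis using assms(1) col(1) b(1) by auto
    qed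
  qed
  then show ?thesis by blast
qed

lemma proper_cyclic_choice_rotate:
  assumes "k < n" "proper_cyclic_choice n (\<lambda>i. L ((i + k) mod n)) col"
  shows "proper_cyclic_choice n L (\<lambda>i. col ((i + (n - k)) mod n))"
  unfolding proper_cyclic_choice_def
proof (intro allI impI)
  fix i assume i: "i < n"
  let ?j = "(i + (n - k)) mod n"
  have "(?j + k) mod n = (i + (n - k) + k) mod n" by (simp add: mod_add_left_eq)
  also have "\<dots> = i" using assms(1) i by simp
  finally have "L ((?j + k) mod n) = L i" by simp
  moreover have "(Suc i mod n + (n - k)) mod n = Suc ?j mod n"
    by (simp add: mod_add_left_eq mod_Suc_eq)
  moreover have "col ?j \<in> L ((?j + k) mod n) \<and> col ?j \<noteq> col (Suc ?j mod n)"
    using assms(2) i unfolding proper_cyclic_choice_def by simp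
  ultimately show "col ?j \<in> L i \<and> col ?j \<noteq> col ((Suc i mod n + (n - k)) mod n)"
    by simp
qed

lemma proper_cyclic_choice_exists:
  assumes "2 \<le> n" "i0 < n" "a \<in> L i0" "\<forall>j<n. j \<noteq> i0 \<longrightarrow> 2 \<le> card (L j)"
    "2 \<le> card (L ((i0 + n - 1) mod n) - {a})"
  shows "\<exists>col. proper_cyclic_choice n L col"
proof -
  have "(j + i0) mod n \<noteq> i0" if "0 < j" "j < n" for j
    using that assms(2) by (cases "j + i0 < n") (auto simp: mod_if)
  then have "\<exists>col. proper_cyclic_choice n (\<lambda>j. L ((j + i0) mod n)) col"
    using assms by (intro proper_cyclic_choice_exists_from_0) (auto simp: add.commute)
  then show ?thesis using proper_cyclic_choice_rotate[OF assms(2)] by blast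
qed

lemma proper_cyclic_choice_alternating:
  assumes "even n" "a \<noteq> b" "\<forall>i<n. a \<in> L i \<and> b \<in> L i"
  shows "proper_cyclic_choice n L (\<lambda>i. if even i then a else b)"
  unfolding proper_cyclic_choice_def
proof (intro allI impI)
  fix i assume "i < n"
  moreover have "Suc i mod n = (if Suc i = n then 0 else Suc i)"
    using \<open>i < n\<close> by simp
  ultimately show "(if even i then a else b) \<in> L i \<and>
      (if even i then a else b) \<noteq> (if even (Suc i mod n) then a else b)"
    using assms by auto
qed

(* The third hypothesis says that the greedy start of proper_cyclic_choice_exists is blocked at
   every position. *)
lemma cyclic_list_eq_pred_if_blocked:
  fixes n :: nat
  assumes "0 < n" "\<forall>i<n. 2 \<le> card (L i)"
    "\<forall>i<n. \<forall>a\<in>L i. card (L ((i + n - 1) mod n) - {a}) < 2"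
    "i < n"
  shows "L i = L ((i + n - 1) mod n)" "card (L i) = 2"
proof -
  let ?p = "(i + n - 1) mod n"
  have "?p < n" using assms(1) by simp
  then have p: "2 \<le> card (L ?p)" using assms(2) by blast
  then have fin: "finite (L ?p)" by (metis card.infinite not_numeral_le_zero)
  have sub: "L i \<subseteq> L ?p"
  proof
    fix a assume "a \<in> L i"
    then have "card (L ?p - {a}) < 2" using assms(3,4) by blast
    then show "a \<in> L ?p" using p by (metis Diff_empty Diff_insert0 not_le)
  qed
  have i: "2 \<le> card (L i)" using assms(2,4) by blast
  then obtain a where a: "a \<in> L i" by (rule obtain_two_elements)
  then have "card (L ?p - {a}) < 2" "a \<in> L ?p" using assms(3,4) sub by blast+
  then have "card (L ?p) = 2" using p by (simp add: card_Diff_singleton)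
  then show "L i = L ?p" "card (L i) = 2"
    using i card_subset_eq[OF fin sub] card_mono[OF fin sub] by simp_all
qed

lemma blocked_if_no_proper_cyclic_choice:
  assumes "2 \<le> n" "\<forall>i<n. 2 \<le> card (L i)" "\<nexists>col. proper_cyclic_choice n L col"
  shows "\<forall>i<n. \<forall>a\<in>L i. card (L ((i + n - 1) mod n) - {a}) < 2"
proof (intro allI impI ballI)
  fix i a assume i: "i < n" and a: "a \<in> L i"
  show "card (L ((i + n - 1) mod n) - {a}) < 2"
  proof (rule ccontr)
    assume "\<not> card (L ((i + n - 1) mod n) - {a}) < 2"
    have "\<forall>j<n. j \<noteq> i \<longrightarrow> 2 \<le> card (L j)" using assms(2) by blast
    moreover have "2 \<le> card (L ((i + n - 1) mod n) - {a})" using \<open>\<not> _ < 2\<close> by simp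
    ultimately have "\<exists>col. proper_cyclic_choice n L col"
      by (rule proper_cyclic_choice_exists[of n i a L, OF assms(1) i a])
    then show False using assms(3) by blast
  qed
qed

lemma no_proper_cyclic_choice:
  assumes "2 \<le> n" "\<forall>i<n. 2 \<le> card (L i)" "\<nexists>col. proper_cyclic_choice n L col"
  shows "odd n \<and> (\<exists>A. card A = 2 \<and> (\<forall>i<n. L i = A))"
proof -
  note blocked = blocked_if_no_proper_cyclic_choice[OF assms]
  have n: "0 < n" using assms(1) by simp
  have same: "\<forall>i<n. L i = L 0"
  proof (intro allI impI)
    fix i assume "i < n"
    then show "L i = L 0"
    proof (induction i)
      case (Suc i)
      have "(Suc i + n - 1) mod n = i" using Suc.prems by simp
      then show ?case
        using cyclic_list_eq_pred_if_blocked(1)[OF n assms(2) blocked Suc.prems] Suc.IH Suc.prems by simp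
    qed simp
  qed
  have two: "card (L 0) = 2"
    using cyclic_list_eq_pred_if_blocked(2)[OF n assms(2) blocked n] .
  have "odd n"
  proof
    assume "even n"
    have "2 \<le> card (L 0)" using two by simp
    then obtain a b where ab: "a \<in> L 0" "b \<in> L 0" "a \<noteq> b" by (rule obtain_two_elements)
    then have "\<forall>i<n. a \<in> L i \<and> b \<in> L i" using same by metis
    then have "proper_cyclic_choice n L (\<lambda>i. if even i then a else b)"
      by (rule proper_cyclic_choice_alternating[OF \<open>even n\<close> ab(3)])
    then show False using assms(3) by blast
  qed
  then show ?thesis using same two by blast
qed

section \<open>Properly coloured Hamiltonian cycles\<close>

locale edge_colored_multigraph =
  fixes V :: "'v set" and E :: "'e set" and ends :: "'e \<Rightarrow> 'v set"
    and c :: nat and phi :: "'e \<Rightarrow> nat"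
  assumes colored_multigraph: "colored_multigraph V E ends c phi"
begin

lemma finite_V: "finite V" and finite_E: "finite E"
  using colored_multigraph by (auto simp: colored_multigraph_def)

lemma obtain_ends:
  assumes "e \<in> E"
  obtains u w where "u \<noteq> w" "u \<in> V" "w \<in> V" "ends e = {u, w}"
  using assms colored_multigraph by (auto simp: colored_multigraph_def)

definition colors_between :: "'v set \<Rightarrow> nat set" where
  "colors_between p = phi ` {e \<in> E. ends e = p}"

definition multicolored_pairs :: "'v set set" where
  "multicolored_pairs =
     {{u, w} | u w. u \<in> V \<and> w \<in> V \<and> u \<noteq> w \<and> 2 \<le> card (colors_between {u, w})}"

definition cycle_colors :: "'v list \<Rightarrow> nat \<Rightarrow> nat set" where
  "cycle_colors xs i = colors_between {xs ! i, xs ! (Suc i mod length xs)}"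

lemma colors_between_doubleton: "colors_between {x, y} = phi ` edges_between E ends x y"
  by (simp add: colors_between_def edges_between_def)

lemma finite_colors_between: "finite (colors_between p)"
  using finite_E by (simp add: colors_between_def)

lemma card_colors_between_multicolored: "p \<in> multicolored_pairs \<Longrightarrow> 2 \<le> card (colors_between p)"
  by (auto simp: multicolored_pairs_def)

lemma no_singleton_multicolored_pairs: "\<forall>u. {u} \<notin> multicolored_pairs"
  by (auto simp: multicolored_pairs_def doubleton_eq_iff)

lemma multicolored_pair_iff:
  "{x, y} \<in> multicolored_pairs \<longleftrightarrow>
     (\<exists>e\<in>edges_between E ends x y. \<exists>f\<in>edges_between E ends x y. phi e \<noteq> phi f)"
proof
  assume "{x, y} \<in> multicolored_pairs"
  then obtain a b where "a \<in> colors_between {x, y}" "b \<in> colors_between {x, y}" "a \<noteq> b"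
    using card_colors_between_multicolored obtain_two_elements by metis
  then show "\<exists>e\<in>edges_between E ends x y. \<exists>f\<in>edges_between E ends x y. phi e \<noteq> phi f"
    unfolding colors_between_doubleton by blast
next
  assume "\<exists>e\<in>edges_between E ends x y. \<exists>f\<in>edges_between E ends x y. phi e \<noteq> phi f"
  then obtain e f where ef: "e \<in> edges_between E ends x y" "f \<in> edges_between E ends x y"
    "phi e \<noteq> phi f" by blast
  then have "e \<in> E" "ends e = {x, y}" by (auto simp: edges_between_def)
  then have xy: "x \<noteq> y" "x \<in> V" "y \<in> V"
    by (metis obtain_ends doubleton_eq_iff)+
  have "{phi e, phi f} \<subseteq> colors_between {x, y}"
    using ef(1,2) by (auto simp: colors_between_doubleton)
  then have "card {phi e, phi f} \<le> card (colors_between {x, y})"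
    by (intro card_mono[OF finite_colors_between])
  then have "2 \<le> card (colors_between {x, y})" using ef(3) by simp
  then show "{x, y} \<in> multicolored_pairs"
    using xy unfolding multicolored_pairs_def by blast
qed

lemma deg_multicolored_pairs: "deg V multicolored_pairs x = delta_dym V E ends phi x"
  unfolding deg_def delta_dym_def multicolored_pair_iff ..

lemma has_PC_ham_cycle_of_proper_cyclic_choice:
  assumes "distinct xs" "set xs = V" "proper_cyclic_choice (length xs) (cycle_colors xs) col"
  shows "has_PC_ham_cycle V E ends phi"
proof -
  let ?n = "length xs"
  have "\<forall>i<?n. \<exists>f. f \<in> edges_between E ends (xs ! i) (xs ! (Suc i mod ?n)) \<and> phi f = col i"
    using assms(3) unfolding proper_cyclic_choice_def cycle_colors_def colors_between_doubleton
    by (metis imageE)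
  then obtain fs where fs: "\<forall>i<?n. fs i \<in> edges_between E ends (xs ! i) (xs ! (Suc i mod ?n))
      \<and> phi (fs i) = col i"
    by metis
  have "PC_ham_cycle V E ends phi xs (map fs [0..<?n])"
    unfolding PC_ham_cycle_def Let_def
  proof (intro conjI allI impI)
    fix i assume i: "i < ?n"
    then have "0 < ?n" by linarith
    then have "Suc i mod ?n < ?n" by simp
    then show "map fs [0..<?n] ! i \<in> edges_between E ends (xs ! i) (xs ! ((i + 1) mod ?n))"
      "phi (map fs [0..<?n] ! i) \<noteq> phi (map fs [0..<?n] ! ((i + 1) mod ?n))"
      using i fs assms(3) by (simp_all add: proper_cyclic_choice_def)
  qed (use assms in auto)
  then show ?thesis unfolding has_PC_ham_cycle_def by blast
qed

lemma ham_cycle_colors_uniform_if_no_PC: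
  assumes "ham_cycle V multicolored_pairs xs" "2 \<le> length xs" "\<not> has_PC_ham_cycle V E ends phi"
  obtains A where "card A = 2" "\<forall>p\<in>cycle_edges xs. colors_between p = A"
proof -
  let ?n = "length xs"
  have xs: "distinct xs" "set xs = V" "cycle_edges xs \<subseteq> multicolored_pairs"
    using assms(1) by (auto simp: ham_cycle_def)
  have ne: "xs \<noteq> []" using assms(2) by auto
  have "\<forall>i<?n. 2 \<le> card (cycle_colors xs i)"
    using xs(3) card_colors_between_multicolored mem_cycle_edges_iff[OF ne]
    unfolding cycle_colors_def by blast
  moreover have "\<nexists>col. proper_cyclic_choice ?n (cycle_colors xs) col"
    using has_PC_ham_cycle_of_proper_cyclic_choice[OF xs(1,2)] assms(3) by blast
  ultimately obtain A where "card A = 2" "\<forall>i<?n. cycle_colors xs i = A"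
    using no_proper_cyclic_choice[OF assms(2)] by blast
  then show ?thesis
    using that mem_cycle_edges_iff[OF ne] unfolding cycle_colors_def by metis
qed

lemma has_PC_ham_cycle_through_foreign_pair:
  assumes "ham_cycle V (insert p multicolored_pairs) xs" "3 \<le> length xs" "p \<in> cycle_edges xs"
    "colors_between p = {a}" "card A = 2" "a \<notin> A"
    "\<forall>q\<in>multicolored_pairs. colors_between q = A"
  shows "has_PC_ham_cycle V E ends phi"
proof -
  let ?n = "length xs"
  have xs: "distinct xs" "set xs = V" "cycle_edges xs \<subseteq> insert p multicolored_pairs"
    using assms(1) by (auto simp: ham_cycle_def)
  have ne: "xs \<noteq> []" using assms(2) by auto
  obtain i0 where i0: "i0 < ?n" "p = {xs ! i0, xs ! (Suc i0 mod ?n)}"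
    using assms(3) mem_cycle_edges_iff[OF ne] by blast
  have others: "cycle_colors xs j = A" if "j < ?n" "j \<noteq> i0" for j
  proof -
    have "{xs ! j, xs ! (Suc j mod ?n)} \<in> cycle_edges xs"
      using that(1) mem_cycle_edges_iff[OF ne] by blast
    moreover have "{xs ! j, xs ! (Suc j mod ?n)} \<noteq> p"
      using cycle_edge_index_inj[OF xs(1) assms(2) that(1) i0(1)] that(2) i0(2) by blast
    ultimately show ?thesis using xs(3) assms(7) unfolding cycle_colors_def by blast
  qed
  let ?pred = "(i0 + ?n - 1) mod ?n"
  have "?pred < ?n" "?pred \<noteq> i0" using i0(1) assms(2) by (auto simp: mod_if)
  then have "card (cycle_colors xs ?pred - {a}) = 2"
    using others assms(5,6) by simp
  moreover have "a \<in> cycle_colors xs i0" using assms(4) i0(2) by (simp add: cycle_colors_def)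
  ultimately obtain col where "proper_cyclic_choice ?n (cycle_colors xs) col"
    using proper_cyclic_choice_exists[of ?n i0 a "cycle_colors xs"] assms(2,5) i0(1) others
    by fastforce
  then show ?thesis using has_PC_ham_cycle_of_proper_cyclic_choice[OF xs(1,2)] by blast
qed

end

locale dym_ore_multigraph = edge_colored_multigraph +
  assumes dym_ore: "\<forall>x\<in>V. \<forall>y\<in>V. x \<noteq> y \<longrightarrow>
      card V + 1 \<le> delta_dym V E ends phi x + delta_dym V E ends phi y"
    and nontrivial: "\<exists>x\<in>V. \<exists>y\<in>V. x \<noteq> y"
begin

lemma ore_multicolored_pairs:
  "\<forall>u\<in>V. \<forall>w\<in>V. u \<noteq> w \<longrightarrow> card V + 1 \<le> deg V multicolored_pairs u + deg V multicolored_pairs w"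
  using dym_ore by (simp add: deg_multicolored_pairs)

lemma three_le_card_V: "3 \<le> card V"
proof -
  obtain x y where xy: "x \<in> V" "y \<in> V" "x \<noteq> y" using nontrivial by blast
  then have "card V + 1 \<le> deg V multicolored_pairs x + deg V multicolored_pairs y"
    using ore_multicolored_pairs by blast
  moreover have "deg V multicolored_pairs x \<le> card V - 1" "deg V multicolored_pairs y \<le> card V - 1"
    using deg_le_card_minus_one[OF finite_V _ no_singleton_multicolored_pairs] xy by auto
  ultimately show ?thesis by linarith
qed

lemma ham_cycle_multicolored_pairs: "\<exists>xs. ham_cycle V multicolored_pairs xs"
  using ore_ham_cycle[OF finite_V three_le_card_V no_singleton_multicolored_pairs]
    ore_multicolored_pairs by fastforce

lemma multicolored_pairs_colors_uniform_if_no_PC: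
  assumes "\<not> has_PC_ham_cycle V E ends phi"
  obtains A where "card A = 2" "\<forall>p\<in>multicolored_pairs. colors_between p = A"
proof -
  obtain xs where xs: "ham_cycle V multicolored_pairs xs" using ham_cycle_multicolored_pairs by blast
  have len: "2 \<le> length xs" using length_ham_cycle[OF xs] three_le_card_V by simp
  obtain A where A: "card A = 2" "\<forall>p\<in>cycle_edges xs. colors_between p = A"
    by (rule ham_cycle_colors_uniform_if_no_PC[OF xs len assms])
  have "colors_between p = A" if p: "p \<in> multicolored_pairs" for p
  proof (cases "p \<in> cycle_edges xs")
    case True
    then show ?thesis using A by blast
  next
    case False
    obtain x y where xy: "x \<in> V" "y \<in> V" "x \<noteq> y" "p = {x, y}"
      using p by (auto simp: multicolored_pairs_def)
    have "{x, y} \<notin> cycle_edges xs" "{x, y} \<in> multicolored_pairs" using False p xy(4) by simp_all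
    then obtain ys e where ys: "ham_cycle V multicolored_pairs ys" "{x, y} \<in> cycle_edges ys"
      "e \<in> cycle_edges xs" "e \<in> cycle_edges ys"
      by (rule ham_cycle_through_pair[OF xs order_refl no_singleton_multicolored_pairs xy(1-3) _ _
            ore_multicolored_pairs])
    have "2 \<le> length ys" using length_ham_cycle[OF ys(1)] three_le_card_V by simp
    then obtain A' where A': "\<forall>q\<in>cycle_edges ys. colors_between q = A'"
      by (rule ham_cycle_colors_uniform_if_no_PC[OF ys(1) _ assms])
    have "colors_between p = A'" using A' ys(2) xy(4) by blast
    also have "A' = colors_between e" using A' ys(4) by blast
    also have "\<dots> = A" using A(2) ys(3) by blast
    finally show ?thesis .
  qed
  then show ?thesis using that A(1) by blast
qed

lemma obtain_monochromatic_pair_outside: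
  assumes "v \<in> V" "3 \<le> card (phi ` incident_edges E ends v)" "card A = 2"
    "\<forall>p\<in>multicolored_pairs. colors_between p = A"
  obtains y a where "y \<in> V" "y \<noteq> v" "colors_between {v, y} = {a}" "a \<notin> A"
proof -
  have "\<not> phi ` incident_edges E ends v \<subseteq> A"
  proof
    assume "phi ` incident_edges E ends v \<subseteq> A"
    moreover have "finite A" using assms(3) by (intro card_ge_0_finite) simp
    ultimately have "card (phi ` incident_edges E ends v) \<le> 2" using assms(3) card_mono by metis
    then show False using assms(2) by simp
  qed
  then obtain g where g: "g \<in> E" "v \<in> ends g" "phi g \<notin> A" by (auto simp: incident_edges_def)
  obtain u w where "u \<noteq> w" "u \<in> V" "w \<in> V" "ends g = {u, w}" using obtain_ends[OF g(1)] .
  then have "\<exists>y\<in>V. y \<noteq> v \<and> ends g = {v, y}" using g(2) by (cases "v = u") (auto simp: insert_commute)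
  then obtain y where y: "y \<in> V" "y \<noteq> v" "ends g = {v, y}" by blast
  have gy: "phi g \<in> colors_between {v, y}" using g(1) y(3) by (simp add: colors_between_def)
  then have "{v, y} \<notin> multicolored_pairs" using assms(4) g(3) by blast
  then have "card (colors_between {v, y}) < 2"
    using assms(1) y(1,2) unfolding multicolored_pairs_def by fastforce
  then have "colors_between {v, y} = {phi g}"
    using gy card_le_Suc0_iff_eq[OF finite_colors_between] by (fastforce simp: numeral_2_eq_2)
  then show ?thesis using that y(1,2) g(3) by blast
qed

theorem has_PC_ham_cycle_if_three_colors:
  assumes "v \<in> V" "3 \<le> card (phi ` incident_edges E ends v)"
  shows "has_PC_ham_cycle V E ends phi"
proof (rule ccontr)
  assume no_PC: "\<not> has_PC_ham_cycle V E ends phi"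
  then obtain A where A: "card A = 2" "\<forall>p\<in>multicolored_pairs. colors_between p = A"
    by (rule multicolored_pairs_colors_uniform_if_no_PC)
  obtain y a where y: "y \<in> V" "y \<noteq> v" and mono: "colors_between {v, y} = {a}" "a \<notin> A"
    by (rule obtain_monochromatic_pair_outside[OF assms A])
  obtain C where C: "ham_cycle V multicolored_pairs C" using ham_cycle_multicolored_pairs by blast
  have "{v, y} \<notin> multicolored_pairs" using A(2) mono by auto
  then have "{v, y} \<notin> cycle_edges C" using C by (auto simp: ham_cycle_def)
  then obtain C' e where C': "ham_cycle V (insert {v, y} multicolored_pairs) C'" "{v, y} \<in> cycle_edges C'"
    by (rule ham_cycle_through_pair[OF C subset_insertI no_singleton_multicolored_pairs assms(1) y(1)
          y(2)[symmetric] _ insertI1 ore_multicolored_pairs])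
  have "3 \<le> length C'" using length_ham_cycle[OF C'(1)] three_le_card_V by simp
  then show False
    using has_PC_ham_cycle_through_foreign_pair[OF C'(1) _ C'(2) mono(1) A(1) mono(2) A(2)] no_PC by blast
qed

end

theorem mainTheorem10:
  fixes V :: "'v set" and E :: "'e set" and ends :: "'e \<Rightarrow> 'v set"
    and c :: nat and phi :: "'e \<Rightarrow> nat"
  assumes G: "colored_multigraph V E ends c phi"
    and two_colors: "\<forall>x\<in>V. \<exists>e\<in>incident_edges E ends x. \<exists>f\<in>incident_edges E ends x. phi e \<noteq> phi f"
    and three_colors: "\<exists>x\<in>V. card (phi ` incident_edges E ends x) \<ge> 3"
    and degree: "\<forall>x\<in>V. \<forall>y\<in>V. x \<noteq> y \<longrightarrow>
                   delta_dym V E ends phi x + delta_dym V E ends phi y \<ge> card V + 1"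
  shows "has_PC_ham_cycle V E ends phi"
proof -
  interpret edge_colored_multigraph V E ends c phi
    using G by unfold_locales
  obtain v where v: "v \<in> V" "3 \<le> card (phi ` incident_edges E ends v)"
    using three_colors by blast
  then obtain g where "g \<in> E" by (fastforce simp: incident_edges_def)
  then obtain u w where "u \<in> V" "w \<in> V" "u \<noteq> w" by (metis obtain_ends)
  then interpret dym_ore_multigraph V E ends c phi
    using degree by unfold_locales auto
  show ?thesis using has_PC_ham_cycle_if_three_colors[OF v] .
qed

end
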